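(* Let $\Gamma$ be a compact connected real analytic curve on a smooth surface $\Sigma$ in $\mathbb{R}^3$. Assume that $\Gamma$ is a line of curvature of $\Sigma$ along which the principal curvature (the normal curvature of $\Sigma$ in the direction tangent to $\Gamma$) vanishes only at finitely many points. If $\Gamma$ has constant geodesic curvature $c$ on $\Sigma$, then there exists a sphere $S$ of radius $\frac{1}{|c|}$ (if $c=0$, $S$ is understood to be a plane) such that $\Sigma$ intersects $S$ orthogonally along $\Gamma$. If instead $\Gamma$ is only a piecewise real analytic curve (with the other hypotheses unchanged), the same conclusion holds with the single sphere replaced by a union of spheres (of radius $\frac{1}{|c|}$, or planes if $c=0$) which intersects $\Sigma$ orthogonally along $\Gamma$.
   Context: A line of curvature on $\Sigma$ is a curve whose tangent vector is at every point a principal direction of $\Sigma$. *)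

theory Defs
  imports "HOL-Analysis.Analysis"
begin

fun Ck_on :: "nat \<Rightarrow> 'a::euclidean_space set \<Rightarrow> ('a \<Rightarrow> 'b::euclidean_space) \<Rightarrow> bool" where
  "Ck_on 0 U f = continuous_on U f"
| "Ck_on (Suc k) U f =
     (\<exists>f'. (\<forall>x\<in>U. (f has_derivative f' x) (at x)) \<and> (\<forall>v. Ck_on k U (\<lambda>x. f' x v)))"

definition smooth_on :: "'a::euclidean_space set \<Rightarrow> ('a \<Rightarrow> 'b::euclidean_space) \<Rightarrow> bool" where
  "smooth_on U f \<longleftrightarrow> (\<forall>k. Ck_on k U f)"

definition real_analytic_on :: "(real \<Rightarrow> 'b::real_normed_vector) \<Rightarrow> real set \<Rightarrow> bool" where
  "real_analytic_on f I \<longleftrightarrow>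
     (\<forall>x\<in>I. \<exists>r>0. \<exists>a::nat \<Rightarrow> 'b. \<forall>y. \<bar>y - x\<bar> < r \<longrightarrow> (\<lambda>n. (y - x) ^ n *\<^sub>R a n) sums f y)"

definition smooth_surface :: "(real^3) set \<Rightarrow> bool" where
  "smooth_surface M \<longleftrightarrow>
     (\<forall>p\<in>M. \<exists>(V::(real^2) set) W (\<phi>::real^2 \<Rightarrow> real^3).
        open V \<and> open W \<and> p \<in> W \<and> smooth_on V \<phi> \<and> \<phi> ` V = M \<inter> W \<and> inj_on \<phi> V \<and>
        continuous_on (M \<inter> W) (inv_into V \<phi>) \<and>
        (\<forall>u\<in>V. inj (frechet_derivative \<phi> (at u))))"

definition tangent_space :: "(real^3) set \<Rightarrow> real^3 \<Rightarrow> (real^3) set" where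
  "tangent_space M p =
     {v. \<exists>g e. e > 0 \<and> (\<forall>t\<in>{-e<..<e}. g t \<in> M) \<and> g 0 = p \<and> (g has_vector_derivative v) (at 0)}"

definition unit_normal :: "(real^3) set \<Rightarrow> real^3 \<Rightarrow> real^3 \<Rightarrow> bool" where
  "unit_normal M p n \<longleftrightarrow> norm n = 1 \<and> (\<forall>v\<in>tangent_space M p. n \<bullet> v = 0)"

text \<open>shape_eigen M p n v k: for a local (differentiable) unit normal field N of M near p
with N p = n, the differential of the Gauss map satisfies dN_p(v) = -k v, i.e. v is an
eigenvector of the shape operator with principal curvature k (w.r.t. the normal n).\<close>
definition shape_eigen :: "(real^3) set \<Rightarrow> real^3 \<Rightarrow> real^3 \<Rightarrow> real^3 \<Rightarrow> real \<Rightarrow> bool" where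
  "shape_eigen M p n v k \<longleftrightarrow>
     (\<exists>U N D. open U \<and> p \<in> U \<and> (\<forall>x\<in>M \<inter> U. unit_normal M x (N x)) \<and> N p = n \<and>
        (N has_derivative D) (at p) \<and> D v = - k *\<^sub>R v)"

definition principal_direction :: "(real^3) set \<Rightarrow> real^3 \<Rightarrow> real^3 \<Rightarrow> bool" where
  "principal_direction M p v \<longleftrightarrow>
     v \<in> tangent_space M p \<and> v \<noteq> 0 \<and> (\<exists>n k. shape_eigen M p n v k)"

definition principal_curvature_vanishes :: "(real^3) set \<Rightarrow> real^3 \<Rightarrow> real^3 \<Rightarrow> bool" where
  "principal_curvature_vanishes M p v \<longleftrightarrow> (\<exists>n. shape_eigen M p n v 0)"

definition vel :: "(real \<Rightarrow> real^3) \<Rightarrow> real \<Rightarrow> real^3" where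
  "vel g t = vector_derivative g (at t)"

definition acc :: "(real \<Rightarrow> real^3) \<Rightarrow> real \<Rightarrow> real^3" where
  "acc g t = vector_derivative (\<lambda>s. vector_derivative g (at s)) (at t)"

definition geodesic_curvature :: "(real \<Rightarrow> real^3) \<Rightarrow> (real \<Rightarrow> real^3) \<Rightarrow> real \<Rightarrow> real" where
  "geodesic_curvature g n t = (acc g t \<bullet> cross3 (n t) (vel g t)) / norm (vel g t) ^ 3"

text \<open>g is a regular real analytic parametrisation of a compact connected embedded curve:
either an arc g|[a,b] (g analytic on an open interval around [a,b]) or a closed curve
(g analytic on R and (b-a)-periodic, injective on one period).\<close>
definition analytic_curve_param :: "(real \<Rightarrow> real^3) \<Rightarrow> real \<Rightarrow> real \<Rightarrow> bool" where
  "analytic_curve_param g a b \<longleftrightarrow> a < b \<and>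
     ((\<exists>I. open I \<and> {a..b} \<subseteq> I \<and> real_analytic_on g I \<and> (\<forall>t\<in>I. vel g t \<noteq> 0)
          \<and> inj_on g {a..b})
      \<or> (real_analytic_on g UNIV \<and> (\<forall>t. g (t + (b - a)) = g t) \<and> (\<forall>t. vel g t \<noteq> 0)
          \<and> inj_on g {a..<b}))"

definition lc_piece_hyps ::
    "(real^3) set \<Rightarrow> real \<Rightarrow> (real \<Rightarrow> real^3) \<Rightarrow> (real \<Rightarrow> real^3) \<Rightarrow> real set \<Rightarrow> bool" where
  "lc_piece_hyps M c g n J \<longleftrightarrow>
     (\<forall>t\<in>J. g t \<in> M \<and> principal_direction M (g t) (vel g t) \<and> geodesic_curvature g n t = c)
     \<and> finite {t\<in>J. principal_curvature_vanishes M (g t) (vel g t)}"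

definition normal_field_along :: "(real^3) set \<Rightarrow> (real \<Rightarrow> real^3) \<Rightarrow> (real \<Rightarrow> real^3) \<Rightarrow> real set \<Rightarrow> bool" where
  "normal_field_along M g n J \<longleftrightarrow> continuous_on J n \<and> (\<forall>t\<in>J. unit_normal M (g t) (n t))"

text \<open>Piecewise real analytic regular embedded curve g|[a,b] (arc, or closed if g a = g b)
with break points s 0 = a < s 1 < ... < s k = b; each piece agrees with a regular real
analytic curve defined on an open interval around the piece.\<close>
definition piecewise_analytic_param ::
    "(real \<Rightarrow> real^3) \<Rightarrow> real \<Rightarrow> real \<Rightarrow> (nat \<Rightarrow> real) \<Rightarrow> nat \<Rightarrow> bool" where
  "piecewise_analytic_param g a b s k \<longleftrightarrow> a < b \<and> k \<ge> 1 \<and> s 0 = a \<and> s k = b \<and>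
     (\<forall>i<k. s i < s (Suc i)) \<and> continuous_on {a..b} g \<and>
     inj_on g {a..<b} \<and> inj_on g {a<..b}"

definition analytic_piece ::
    "(real \<Rightarrow> real^3) \<Rightarrow> (real \<Rightarrow> real^3) \<Rightarrow> real \<Rightarrow> real \<Rightarrow> bool" where
  "analytic_piece g h \<alpha> \<beta> \<longleftrightarrow>
     (\<exists>I. open I \<and> {\<alpha>..\<beta>} \<subseteq> I \<and> real_analytic_on h I \<and> (\<forall>t\<in>I. vel h t \<noteq> 0)) \<and>
     (\<forall>t\<in>{\<alpha>..\<beta>}. h t = g t)"

definition sphere_or_plane :: "real \<Rightarrow> (real^3) set \<Rightarrow> bool" where
  "sphere_or_plane c S \<longleftrightarrow>
     (c \<noteq> 0 \<and> (\<exists>z. S = sphere z (1 / \<bar>c\<bar>))) \<or>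
     (c = 0 \<and> (\<exists>u d. u \<noteq> 0 \<and> S = {x. u \<bullet> x = d}))"

definition meet_orthogonally_along :: "(real^3) set \<Rightarrow> (real^3) set \<Rightarrow> (real^3) set \<Rightarrow> bool" where
  "meet_orthogonally_along M S A \<longleftrightarrow> A \<subseteq> M \<inter> S \<and>
     (\<forall>p\<in>A. \<forall>n m. unit_normal M p n \<longrightarrow> unit_normal S p m \<longrightarrow> n \<bullet> m = 0)"

end

theory Submission
  imports Defs
begin

text \<open>Along a line of curvature \<gamma> with velocity T, the surface normal n satisfies Rodrigues'
equation n' = \<kappa> T. Hence the conormal b = n \<times> T / |T| of the Darboux frame satisfies b' = -c T,
where c is the geodesic curvature (the geodesic torsion vanishes). For constant c \<noteq> 0 the point
\<gamma> + b / c is therefore fixed, so \<gamma> lies on the sphere of radius 1/|c| about it, and the normal of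
that sphere at \<gamma> is parallel to b, hence orthogonal to n. For c = 0 the conormal is constant and
\<gamma> lies in a plane with normal b. A piecewise analytic curve is handled piece by piece.\<close>

lemma has_derivative_in_tangent_space:
  assumes "open V" "u \<in> V" "\<phi> ` V \<subseteq> M" "(\<phi> has_derivative \<phi>') (at u)"
  shows "\<phi>' v \<in> tangent_space M (\<phi> u)"
proof -
  let ?line = "\<lambda>t::real. u + t *\<^sub>R v"
  have "open (?line -` V)"
    using assms(1) by (intro continuous_open_vimage) (auto intro!: continuous_intros)
  moreover have "0 \<in> ?line -` V" using assms(2) by simp
  ultimately obtain d where d: "d > 0" "ball 0 d \<subseteq> ?line -` V"
    using open_contains_ball_eq by blast
  have "\<forall>t\<in>{-d<..<d}. \<phi> (?line t) \<in> M"
    using d(2) assms(3) by (auto simp: ball_eq_greaterThanLessThan)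
  moreover have "(?line has_derivative (\<lambda>t. t *\<^sub>R v)) (at 0)"
    by (auto intro!: derivative_eq_intros)
  then have "((\<lambda>t. \<phi> (?line t)) has_derivative (\<lambda>t. \<phi>' (t *\<^sub>R v))) (at 0)"
    using has_derivative_compose[of ?line _ 0 UNIV \<phi> \<phi>'] assms(4) by simp
  then have "((\<lambda>t. \<phi> (?line t)) has_vector_derivative \<phi>' v) (at 0)"
    using linear_scale[OF has_derivative_linear[OF assms(4)]]
    by (simp add: has_vector_derivative_def)
  ultimately show ?thesis
    unfolding tangent_space_def using d(1) by force
qed

lemma smooth_surface_tangent_pair:
  assumes "smooth_surface M" "p \<in> M"
  obtains v w where "v \<in> tangent_space M p" "w \<in> tangent_space M p" "cross3 v w \<noteq> 0"
proof -
  obtain V W and \<phi> :: "real^2 \<Rightarrow> real^3" where chart: "open V" "smooth_on V \<phi>" "\<phi> ` V = M \<inter> W"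
      "p \<in> W" "\<forall>u\<in>V. inj (frechet_derivative \<phi> (at u))"
    using assms unfolding smooth_surface_def by metis
  obtain u where u: "u \<in> V" "p = \<phi> u" using chart(3,4) assms(2) by blast
  have "Ck_on 1 V \<phi>" using chart(2) unfolding smooth_on_def by blast
  then obtain \<phi>' where d: "(\<phi> has_derivative \<phi>') (at u)" using u(1) by auto
  have inj: "inj \<phi>'" using chart(5) u(1) frechet_derivative_at[OF d] by auto
  have lin: "linear \<phi>'" using d has_derivative_linear by blast
  let ?v = "\<phi>' (axis 1 1)" and ?w = "\<phi>' (axis 2 1)"
  have "\<not> collinear {0, ?v, ?w}"
  proof
    assume "collinear {0, ?v, ?w}"
    then consider "?v = \<phi>' 0" | "?w = \<phi>' 0" | c where "?w = \<phi>' (c *\<^sub>R axis 1 1)"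
      unfolding collinear_lemma using linear_0[OF lin] linear_scale[OF lin] by metis
    then show False
    proof cases
      case 3
      then have "(axis 2 1 :: real^2) $ 2 = (c *\<^sub>R axis 1 1 :: real^2) $ 2"
        using injD[OF inj] by metis
      then show False by (simp add: axis_def)
    qed (metis inj axis_eq_0_iff one_neq_zero injD)+
  qed
  moreover have "?v \<in> tangent_space M p" "?w \<in> tangent_space M p"
    using has_derivative_in_tangent_space[OF chart(1) u(1) _ d] chart(3) u(2) by auto
  ultimately show ?thesis using that by (simp add: cross_eq_0)
qed

lemma orthogonal_both_imp_parallel_cross3:
  fixes x v w :: "real^3"
  assumes "x \<bullet> v = 0" "x \<bullet> w = 0" "cross3 v w \<noteq> 0"
  obtains \<mu> where "x = \<mu> *\<^sub>R cross3 v w"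
proof -
  have "cross3 (cross3 v w) x = 0"
    using assms(1,2) by (simp add: cross_skew[of "cross3 v w" x] Lagrange)
  then have "collinear {0, cross3 v w, x}" by (simp add: cross_eq_0)
  then show ?thesis using assms(3) that unfolding collinear_lemma by auto
qed

lemma unit_normal_unique_up_to_sign:
  assumes "smooth_surface M" "p \<in> M" "unit_normal M p n" "unit_normal M p n'"
  shows "n' = n \<or> n' = - n"
proof -
  obtain v w where vw: "v \<in> tangent_space M p" "w \<in> tangent_space M p" "cross3 v w \<noteq> 0"
    using smooth_surface_tangent_pair[OF assms(1,2)] .
  obtain \<mu> \<mu>' where "n = \<mu> *\<^sub>R cross3 v w" "n' = \<mu>' *\<^sub>R cross3 v w"
    using orthogonal_both_imp_parallel_cross3 vw assms(3,4) unfolding unit_normal_def by metis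
  moreover have "norm n = 1" "norm n' = 1" using assms(3,4) unfolding unit_normal_def by auto
  ultimately have "\<bar>\<mu>\<bar> * norm (cross3 v w) = \<bar>\<mu>'\<bar> * norm (cross3 v w)" by simp
  with vw(3) have "\<bar>\<mu>\<bar> = \<bar>\<mu>'\<bar>" by simp
  with \<open>n = \<mu> *\<^sub>R cross3 v w\<close> \<open>n' = \<mu>' *\<^sub>R cross3 v w\<close> show ?thesis by (auto simp: abs_eq_iff)
qed

lemma orthogonal_complement_parallel:
  fixes m q :: "'a::real_inner"
  assumes "\<And>v. v \<bullet> q = 0 \<Longrightarrow> m \<bullet> v = 0" "q \<noteq> 0"
  obtains \<mu> where "m = \<mu> *\<^sub>R q"
proof -
  define v where "v = m - ((m \<bullet> q) / (q \<bullet> q)) *\<^sub>R q"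
  have "v \<bullet> q = 0" using assms(2) by (simp add: v_def inner_diff_left)
  moreover from this have "m \<bullet> v = 0" using assms(1) by blast
  ultimately have "v \<bullet> v = 0" by (simp add: v_def inner_diff_left inner_commute)
  then show ?thesis using that by (simp add: v_def)
qed

lemma orthogonal_in_tangent_space_sphere:
  fixes z p v :: "real^3"
  assumes "dist z p = r" "r > 0" "v \<bullet> (p - z) = 0"
  shows "v \<in> tangent_space (sphere z r) p"
proof (cases "v = 0")
  case True
  then show ?thesis using assms(1) unfolding tangent_space_def
    by (intro CollectI exI[of _ "\<lambda>t. p"] exI[of _ 1]) auto
next
  case False
  define s where "s = norm v / r"
  have s: "s > 0" using False assms(2) by (simp add: s_def)
  define g where "g t = z + cos (s * t) *\<^sub>R (p - z) + (sin (s * t) / s) *\<^sub>R v" for t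
  have "norm (g t - z) = r" for t
  proof -
    have "(norm (g t - z))\<^sup>2 = (cos (s*t))\<^sup>2 * (norm (p - z))\<^sup>2 + (sin (s*t) / s)\<^sup>2 * (norm v)\<^sup>2"
      unfolding g_def power2_norm_eq_inner using assms(3)
      by (simp add: inner_add_left inner_add_right inner_commute power2_eq_square algebra_simps)
    also have "\<dots> = r\<^sup>2"
      using s assms(1,2) by (simp add: s_def dist_norm norm_minus_commute power_divide field_simps)
        (metis sin_cos_squared_add2 mult_1 distrib_right power2_eq_square mult.commute)
    finally show ?thesis using assms(2) by (simp add: power2_eq_iff_nonneg)
  qed
  then have "g t \<in> sphere z r" for t by (simp add: dist_norm norm_minus_commute)
  moreover have "(g has_vector_derivative v) (at 0)"
    using has_vector_derivative_eq_rhs s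
    unfolding g_def by (auto intro!: derivative_eq_intros)
  ultimately show ?thesis unfolding tangent_space_def
    by (intro CollectI exI[of _ g] exI[of _ 1]) (auto simp: g_def)
qed

lemma orthogonal_in_tangent_space_hyperplane:
  fixes p u v :: "real^3"
  assumes "u \<bullet> p = d" "u \<bullet> v = 0"
  shows "v \<in> tangent_space {x. u \<bullet> x = d} p"
proof -
  have "((\<lambda>t. p + t *\<^sub>R v) has_vector_derivative v) (at 0)"
    by (auto intro!: derivative_eq_intros)
  then show ?thesis unfolding tangent_space_def using assms
    by (intro CollectI exI[of _ "\<lambda>t. p + t *\<^sub>R v"] exI[of _ 1]) (auto simp: inner_add_right)
qed

lemma unit_normal_sphere_parallel:
  fixes z p m :: "real^3"
  assumes "unit_normal (sphere z r) p m" "dist z p = r" "r > 0"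
  obtains \<mu> where "m = \<mu> *\<^sub>R (p - z)"
proof (rule orthogonal_complement_parallel)
  show "p - z \<noteq> 0" using assms(2,3) by auto
  show "m \<bullet> v = 0" if "v \<bullet> (p - z) = 0" for v
    using assms orthogonal_in_tangent_space_sphere[OF assms(2,3) that]
    unfolding unit_normal_def by auto
qed

lemma unit_normal_hyperplane_parallel:
  fixes u p m :: "real^3"
  assumes "unit_normal {x. u \<bullet> x = d} p m" "u \<bullet> p = d" "u \<noteq> 0"
  obtains \<mu> where "m = \<mu> *\<^sub>R u"
proof (rule orthogonal_complement_parallel)
  show "m \<bullet> v = 0" if "v \<bullet> u = 0" for v
    using assms orthogonal_in_tangent_space_hyperplane[OF assms(2), of v] that
    unfolding unit_normal_def by (auto simp: inner_commute)
qed (use assms(3) in auto)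

lemma powser_shift_has_field_derivative:
  fixes c :: "nat \<Rightarrow> real"
  assumes "\<And>z. norm z < r \<Longrightarrow> summable (\<lambda>n. c n * z ^ n)" "\<bar>y - t\<bar> < r"
  shows "((\<lambda>x. \<Sum>n. c n * (x - t) ^ n) has_field_derivative (\<Sum>n. diffs c n * (y - t) ^ n)) (at y)"
proof -
  have "((\<lambda>z. \<Sum>n. c n * z ^ n) has_field_derivative (\<Sum>n. diffs c n * (y - t) ^ n)) (at (y - t))"
    using termdiffs_strong'[of r c "y - t"] assms by auto
  then show ?thesis
    using DERIV_shift[of "\<lambda>z. \<Sum>n. c n * z ^ n" _ y "- t"] by simp
qed

lemma real_analytic_on_twice_differentiable:
  fixes f :: "real \<Rightarrow> 'b::euclidean_space"
  assumes "real_analytic_on f I" "t \<in> I"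
  shows "f differentiable (at t) \<and> (\<lambda>s. vector_derivative f (at s)) differentiable (at t)"
proof -
  obtain r a where r: "r > 0" and sums: "\<And>y. \<bar>y - t\<bar> < r \<Longrightarrow> (\<lambda>n. (y - t) ^ n *\<^sub>R a n) sums f y"
    using assms unfolding real_analytic_on_def by blast
  define c where "c b n = a n \<bullet> b" for b n
  define F where "F c' y = (\<Sum>n. c' n * (y - t) ^ n)" for c' y
  have component_sums: "(\<lambda>n. c b n * (y - t) ^ n) sums (f y \<bullet> b)" if "\<bar>y - t\<bar> < r" for y b
    using bounded_linear.sums[OF bounded_linear_inner_left sums[OF that]]
    by (simp add: c_def mult.commute)
  then have summable: "summable (\<lambda>n. c b n * z ^ n)" if "norm z < r" for z b
    using component_sums[of "z + t" b] that by (auto simp: sums_iff)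
  then have summable': "summable (\<lambda>n. diffs (c b) n * z ^ n)" if "norm z < r" for z b
    using termdiff_converges[of z r "c b"] that by blast
  define B where "B = ball t r"
  have B: "open B" "t \<in> B" "\<And>y. y \<in> B \<longleftrightarrow> \<bar>y - t\<bar> < r"
    using r by (auto simp: B_def dist_real_def abs_minus_commute)
  have f_eq: "f y = (\<Sum>b\<in>Basis. F (c b) y *\<^sub>R b)" if "y \<in> B" for y
    using component_sums B(3) that by (simp add: F_def sums_iff euclidean_representation)
  have dF: "(F (c b) has_field_derivative F (diffs (c b)) y) (at y)"
    and dF': "(F (diffs (c b)) has_field_derivative F (diffs (diffs (c b))) y) (at y)"
    if "y \<in> B" for b y
    using powser_shift_has_field_derivative[of r "c b" y t] powser_shift_has_field_derivative[of r "diffs (c b)" y t]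
      summable summable' B(3) that unfolding F_def by auto
  have "((\<lambda>y. \<Sum>b\<in>Basis. F (c b) y *\<^sub>R b) has_vector_derivative (\<Sum>b\<in>Basis. F (diffs (c b)) y *\<^sub>R b)) (at y)"
    if "y \<in> B" for y
    using dF[OF that]
    by (auto intro!: derivative_eq_intros simp: has_real_derivative_iff_has_vector_derivative[symmetric])
  then have df: "(f has_vector_derivative (\<Sum>b\<in>Basis. F (diffs (c b)) y *\<^sub>R b)) (at y)" if "y \<in> B" for y
    by (rule has_vector_derivative_transform_within_open[OF _ B(1) that]) (use that f_eq in auto)
  have "((\<lambda>y. \<Sum>b\<in>Basis. F (diffs (c b)) y *\<^sub>R b) has_vector_derivative
      (\<Sum>b\<in>Basis. F (diffs (diffs (c b))) t *\<^sub>R b)) (at t)"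
    using dF'[OF B(2)]
    by (auto intro!: derivative_eq_intros simp: has_real_derivative_iff_has_vector_derivative[symmetric])
  then have "((\<lambda>s. vector_derivative f (at s)) has_vector_derivative
      (\<Sum>b\<in>Basis. F (diffs (diffs (c b))) t *\<^sub>R b)) (at t)"
    by (rule has_vector_derivative_transform_within_open[OF _ B(1,2)]) (simp add: vector_derivative_at[OF df])
  then show ?thesis using df[OF B(2)] unfolding differentiable_def has_vector_derivative_def by blast
qed

lemma real_analytic_on_has_vel_acc:
  assumes "real_analytic_on g I" "t \<in> I"
  shows "(g has_vector_derivative vel g t) (at t) \<and> (vel g has_vector_derivative acc g t) (at t)"
  using real_analytic_on_twice_differentiable[OF assms]
  unfolding vel_def acc_def by (metis vector_derivative_works)

definition regular_C2_curve_on :: "(real \<Rightarrow> real^3) \<Rightarrow> real set \<Rightarrow> bool" where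
  "regular_C2_curve_on h J \<longleftrightarrow>
     (\<forall>t\<in>J. (h has_vector_derivative vel h t) (at t) \<and> (vel h has_vector_derivative acc h t) (at t)
            \<and> vel h t \<noteq> 0)"

lemma analytic_curve_param_regular_C2:
  assumes "analytic_curve_param g a b"
  shows "regular_C2_curve_on g {a..b}"
  using assms real_analytic_on_has_vel_acc
  unfolding analytic_curve_param_def regular_C2_curve_on_def by blast

lemma analytic_piece_regular_C2:
  assumes "analytic_piece g h \<alpha> \<beta>"
  shows "regular_C2_curve_on h {\<alpha>..\<beta>}"
  using assms real_analytic_on_has_vel_acc
  unfolding analytic_piece_def regular_C2_curve_on_def by blast

section \<open>Rodrigues' equation and the Darboux frame\<close>

lemma unit_normal_fields_eventually_eq:
  assumes "smooth_surface M" "t \<in> S"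
    and "continuous (at t within S) n" "continuous (at t within S) m" "n t = m t"
    and "\<forall>s\<in>S. h s \<in> M \<and> unit_normal M (h s) (n s)"
    and "\<forall>\<^sub>F s in at t within S. unit_normal M (h s) (m s)"
  shows "\<forall>\<^sub>F s in at t within S. n s = m s"
proof -
  have "((\<lambda>s. n s - m s) \<longlongrightarrow> n t - m t) (at t within S)"
    using assms(3,4) unfolding continuous_within by (rule tendsto_diff)
  then have "((\<lambda>s. norm (n s - m s)) \<longlongrightarrow> 0) (at t within S)"
    using assms(5) by (simp add: tendsto_norm_zero)
  then have "\<forall>\<^sub>F s in at t within S. norm (n s - m s) < 2"
    by (rule order_tendstoD(2)) simp
  moreover have "\<forall>\<^sub>F s in at t within S. s \<in> S" by (simp add: eventually_at_filter)
  ultimately show ?thesis using assms(7)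
  proof eventually_elim
    case (elim s)
    \<comment> \<open>two unit normals are equal or opposite, and opposite ones are at distance 2\<close>
    have "m s = n s \<or> m s = - n s"
      using unit_normal_unique_up_to_sign assms(1,6) elim by blast
    moreover have "norm (n s + n s) = 2"
      using assms(6) elim(2) unfolding unit_normal_def scaleR_2[symmetric] by simp
    ultimately show "n s = m s" using elim(1) by auto
  qed
qed

lemma normal_field_eventually_signed_gauss_map:
  assumes "smooth_surface M" "t \<in> S" "continuous_on S n"
    and on_M: "\<forall>s\<in>S. h s \<in> M \<and> unit_normal M (h s) (n s)"
    and h_cont: "continuous (at t) h"
    and "open U" "h t \<in> U" and N: "\<forall>x\<in>M \<inter> U. unit_normal M x (N x)"
    and N_cont: "continuous (at (h t)) N"
  obtains \<sigma> :: real where "\<bar>\<sigma>\<bar> = 1" "n t = \<sigma> *\<^sub>R N (h t)"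
    "\<forall>\<^sub>F s in at t within S. n s = \<sigma> *\<^sub>R N (h s)"
proof -
  have "N (h t) = n t \<or> N (h t) = - n t"
    using unit_normal_unique_up_to_sign assms(1,2,7) on_M N by blast
  then obtain \<sigma> :: real where \<sigma>: "\<bar>\<sigma>\<bar> = 1" "n t = \<sigma> *\<^sub>R N (h t)"
  proof (elim disjE)
    assume "N (h t) = n t"
    then show thesis using that[of 1] by simp
  next
    assume "N (h t) = - n t"
    then show thesis using that[of "-1"] by simp
  qed
  have n_cont: "continuous (at t within S) n"
    using assms(2,3) continuous_on_eq_continuous_within by blast
  have "continuous (at t) (\<lambda>s. N (h s))"
    using continuous_at_compose[OF h_cont N_cont] by (simp add: o_def)
  then have \<sigma>N_cont: "continuous (at t within S) (\<lambda>s. \<sigma> *\<^sub>R N (h s))"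
    by (auto intro: continuous_intros continuous_at_imp_continuous_within)
  have "(h \<longlongrightarrow> h t) (at t within S)"
    using h_cont continuous_at_imp_continuous_within continuous_within by blast
  then have "\<forall>\<^sub>F s in at t within S. h s \<in> U"
    using assms(6,7) by (rule topological_tendstoD)
  moreover have "\<forall>\<^sub>F s in at t within S. s \<in> S" by (simp add: eventually_at_filter)
  ultimately have "\<forall>\<^sub>F s in at t within S. unit_normal M (h s) (\<sigma> *\<^sub>R N (h s))"
  proof eventually_elim
    case (elim s)
    then have "unit_normal M (h s) (N (h s))" using N on_M by auto
    with \<sigma>(1) show ?case by (simp add: unit_normal_def)
  qed
  then show ?thesis
    using that \<sigma> unit_normal_fields_eventually_eq[OF assms(1,2) n_cont \<sigma>N_cont \<sigma>(2) on_M] by blast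
qed

lemma normal_along_line_of_curvature_has_vector_derivative:
  assumes "smooth_surface M" "t \<in> S" "continuous_on S n"
    and "\<forall>s\<in>S. h s \<in> M \<and> unit_normal M (h s) (n s)"
    and h': "(h has_vector_derivative T) (at t)" and "principal_direction M (h t) T"
  obtains \<kappa> where "(n has_vector_derivative \<kappa> *\<^sub>R T) (at t within S)"
proof -
  obtain k U N D where U: "open U" "h t \<in> U" "\<forall>x\<in>M \<inter> U. unit_normal M x (N x)"
      and N': "(N has_derivative D) (at (h t))" and eigen: "D T = - k *\<^sub>R T"
    using assms(6) unfolding principal_direction_def shape_eigen_def by blast
  have "continuous (at t) h"
    using h' has_vector_derivative_continuous by blast
  then obtain \<sigma> where "\<bar>\<sigma>\<bar> = 1" and
      \<sigma>: "n t = \<sigma> *\<^sub>R N (h t)" "\<forall>\<^sub>F s in at t within S. n s = \<sigma> *\<^sub>R N (h s)"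
    by (rule normal_field_eventually_signed_gauss_map[OF assms(1-4) _ U has_derivative_continuous[OF N']])
  have "((\<lambda>s. \<sigma> *\<^sub>R N (h s)) has_derivative (\<lambda>u. \<sigma> *\<^sub>R D (u *\<^sub>R T))) (at t)"
    using has_derivative_compose[OF h'[unfolded has_vector_derivative_def] N']
    by (auto intro: derivative_intros)
  moreover have "(\<lambda>u. \<sigma> *\<^sub>R D (u *\<^sub>R T)) = (\<lambda>u. u *\<^sub>R ((- \<sigma> * k) *\<^sub>R T))"
    using linear_scale[OF has_derivative_linear[OF N']] eigen by auto
  ultimately have "((\<lambda>s. \<sigma> *\<^sub>R N (h s)) has_derivative (\<lambda>u. u *\<^sub>R ((- \<sigma> * k) *\<^sub>R T))) (at t within S)"
    by (auto intro: has_derivative_at_withinI)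
  then have "(n has_derivative (\<lambda>u. u *\<^sub>R ((- \<sigma> * k) *\<^sub>R T))) (at t within S)"
  proof (rule has_derivative_transform_eventually)
    show "\<forall>\<^sub>F s in at t within S. \<sigma> *\<^sub>R N (h s) = n s"
      using \<sigma>(2) by (rule eventually_mono) simp
  qed (use \<sigma>(1) assms(2) in simp_all)
  then show ?thesis using that unfolding has_vector_derivative_def by blast
qed

lemma conormal_has_vector_derivative:
  fixes n T :: "real \<Rightarrow> real^3"
  assumes n': "(n has_vector_derivative \<kappa> *\<^sub>R T t) (at t within S)"
    and T': "(T has_vector_derivative A) (at t within S)"
    and "T t \<noteq> 0" "n t \<bullet> T t = 0"
  shows "((\<lambda>s. inverse (norm (T s)) *\<^sub>R cross3 (n s) (T s)) has_vector_derivative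
           - ((A \<bullet> cross3 (n t) (T t)) / norm (T t) ^ 3) *\<^sub>R T t) (at t within S)"
proof -
  have cross3_bilinear: "bounded_bilinear cross3"
    using bilinear_cross bilinear_conv_bounded_bilinear by blast
  have dT: "(T has_derivative (\<lambda>u. u *\<^sub>R A)) (at t within S)"
    using T' by (simp add: has_vector_derivative_def)
  have dnorm: "((\<lambda>s. norm (T s)) has_derivative (\<lambda>u. (u *\<^sub>R A) \<bullet> sgn (T t))) (at t within S)"
    using has_derivative_compose[OF dT has_derivative_norm[OF assms(3)]] .
  have "((\<lambda>s. inverse (norm (T s))) has_derivative
      (\<lambda>u. - (inverse (norm (T t)) * ((u *\<^sub>R A) \<bullet> sgn (T t)) * inverse (norm (T t))))) (at t within S)"
    using Deriv.has_derivative_inverse[OF _ dnorm] assms(3) by simp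
  moreover have "((\<lambda>s. cross3 (n s) (T s)) has_derivative
      (\<lambda>u. cross3 (n t) (u *\<^sub>R A) + cross3 (u *\<^sub>R (\<kappa> *\<^sub>R T t)) (T t))) (at t within S)"
    using bounded_bilinear.FDERIV[OF cross3_bilinear n'[unfolded has_vector_derivative_def] dT] .
  ultimately have "((\<lambda>s. inverse (norm (T s)) *\<^sub>R cross3 (n s) (T s)) has_vector_derivative
      inverse (norm (T t)) *\<^sub>R cross3 (n t) A - ((A \<bullet> sgn (T t)) / (norm (T t))\<^sup>2) *\<^sub>R cross3 (n t) (T t))
      (at t within S)"
    unfolding has_vector_derivative_def
    by (rule has_derivative_eq_rhs[OF has_derivative_scaleR])
      (simp add: cross_mult_left cross_mult_right scaleR_diff_right power2_eq_square field_simps)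
  also have "inverse (norm (T t)) *\<^sub>R cross3 (n t) A - ((A \<bullet> sgn (T t)) / (norm (T t))\<^sup>2) *\<^sub>R cross3 (n t) (T t)
      = (1 / norm (T t) ^ 3) *\<^sub>R ((T t \<bullet> T t) *\<^sub>R cross3 (n t) A - (T t \<bullet> A) *\<^sub>R cross3 (n t) (T t))"
    using assms(3) by (simp add: sgn_div_norm inner_commute power2_norm_eq_inner[symmetric]
      scaleR_diff_right field_simps power3_eq_cube power2_eq_square)
  also have "(T t \<bullet> T t) *\<^sub>R cross3 (n t) A - (T t \<bullet> A) *\<^sub>R cross3 (n t) (T t)
      = cross3 (n t) (cross3 (T t) (cross3 A (T t)))"
    by (simp add: Lagrange cross_mult_right Cross3.right_diff_distrib inner_commute)
  also have "\<dots> = (n t \<bullet> cross3 A (T t)) *\<^sub>R T t"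
    using assms(4) by (simp only: Lagrange[of "n t" "T t" "cross3 A (T t)"]) simp
  also have "n t \<bullet> cross3 A (T t) = - (A \<bullet> cross3 (n t) (T t))"
    by (simp add: cross3_simps)
  finally show ?thesis by simp
qed

definition conormal :: "(real \<Rightarrow> real^3) \<Rightarrow> (real \<Rightarrow> real^3) \<Rightarrow> real \<Rightarrow> real^3" where
  "conormal h n t = inverse (norm (vel h t)) *\<^sub>R cross3 (n t) (vel h t)"

lemma norm_conormal:
  assumes "unit_normal M (h t) (n t)" "vel h t \<in> tangent_space M (h t)" "vel h t \<noteq> 0"
  shows "norm (conormal h n t) = 1"
proof -
  have "n t \<bullet> vel h t = 0" "norm (n t) = 1" using assms(1,2) unfolding unit_normal_def by auto
  then have "(norm (cross3 (n t) (vel h t)))\<^sup>2 = (norm (vel h t))\<^sup>2"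
    using norm_cross[of "n t" "vel h t"] by simp
  then show ?thesis using assms(3) by (simp add: conormal_def power2_eq_iff_nonneg)
qed

lemma conormal_has_vector_derivative_along_line_of_curvature:
  assumes "smooth_surface M" "regular_C2_curve_on h I" "normal_field_along M h n I" "t \<in> I"
    and lc: "\<forall>s\<in>I. h s \<in> M \<and> principal_direction M (h s) (vel h s)"
  shows "(conormal h n has_vector_derivative - geodesic_curvature h n t *\<^sub>R vel h t) (at t within I)"
proof -
  have h': "(h has_vector_derivative vel h t) (at t)" and T': "(vel h has_vector_derivative acc h t) (at t)"
    and "vel h t \<noteq> 0"
    using assms(2,4) unfolding regular_C2_curve_on_def by auto
  have on_M: "\<forall>s\<in>I. h s \<in> M \<and> unit_normal M (h s) (n s)"
    using lc assms(3) unfolding normal_field_along_def by blast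
  then have "n t \<bullet> vel h t = 0"
    using lc assms(4) unfolding principal_direction_def unit_normal_def by blast
  moreover obtain \<kappa> where "(n has_vector_derivative \<kappa> *\<^sub>R vel h t) (at t within I)"
    using normal_along_line_of_curvature_has_vector_derivative[OF assms(1,4) _ on_M h'] assms(3,4) lc
    unfolding normal_field_along_def by blast
  ultimately show ?thesis
    using conormal_has_vector_derivative[OF _ has_vector_derivative_at_within[OF T'] \<open>vel h t \<noteq> 0\<close>]
    unfolding conormal_def[abs_def] geodesic_curvature_def by simp
qed

section \<open>Curves on spheres and planes\<close>

lemma curve_on_sphere_of_conormal:
  fixes h b T :: "real \<Rightarrow> real^3" and I :: "real set"
  assumes "convex I" "c \<noteq> 0"
    and h': "\<And>t. t \<in> I \<Longrightarrow> (h has_vector_derivative T t) (at t within I)"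
    and b': "\<And>t. t \<in> I \<Longrightarrow> (b has_vector_derivative - c *\<^sub>R T t) (at t within I)"
    and b_unit: "\<And>t. t \<in> I \<Longrightarrow> norm (b t) = 1"
  obtains S where "sphere_or_plane c S" "\<And>t. t \<in> I \<Longrightarrow> h t \<in> S"
    "\<And>t m. t \<in> I \<Longrightarrow> unit_normal S (h t) m \<Longrightarrow> \<exists>\<mu>. m = \<mu> *\<^sub>R b t"
proof -
  have "((\<lambda>s. h s + (1 / c) *\<^sub>R b s) has_vector_derivative
      T t + ((1 / c) *\<^sub>R (- c *\<^sub>R T t) + 0 *\<^sub>R b t)) (at t within I)" if "t \<in> I" for t
    using has_vector_derivative_add[OF h'[OF that] has_vector_derivative_scaleR[OF DERIV_const b'[OF that]]] .
  then have "((\<lambda>s. h s + (1 / c) *\<^sub>R b s) has_derivative (\<lambda>u. 0)) (at t within I)" if "t \<in> I" for t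
    using that \<open>c \<noteq> 0\<close> by (simp add: has_vector_derivative_def)
  then obtain z where z0: "\<forall>t\<in>I. h t + (1 / c) *\<^sub>R b t = z"
    using has_derivative_zero_constant[OF assms(1)] by blast
  have z: "h t - z = - (1 / c) *\<^sub>R b t" if "t \<in> I" for t
  proof -
    have "z = h t + (1 / c) *\<^sub>R b t" using z0 that by simp
    then show ?thesis by simp
  qed
  have dist: "dist z (h t) = 1 / \<bar>c\<bar>" if "t \<in> I" for t
  proof -
    have "norm (h t - z) = 1 / \<bar>c\<bar>" using z[OF that] b_unit[OF that] by simp
    then show ?thesis by (simp add: dist_norm norm_minus_commute)
  qed
  show ?thesis
  proof (rule that)
    show "sphere_or_plane c (sphere z (1 / \<bar>c\<bar>))" using \<open>c \<noteq> 0\<close> by (auto simp: sphere_or_plane_def)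
    show "h t \<in> sphere z (1 / \<bar>c\<bar>)" if "t \<in> I" for t using dist[OF that] by simp
    show "\<exists>\<mu>. m = \<mu> *\<^sub>R b t"
      if t: "t \<in> I" and m: "unit_normal (sphere z (1 / \<bar>c\<bar>)) (h t) m" for t m
    proof -
      have "1 / \<bar>c\<bar> > 0" using \<open>c \<noteq> 0\<close> by simp
      then obtain \<mu> where "m = \<mu> *\<^sub>R (h t - z)"
        using unit_normal_sphere_parallel[OF m dist[OF t]] by blast
      then have "m = (- \<mu> / c) *\<^sub>R b t" using z[OF t] by simp
      then show ?thesis by blast
    qed
  qed
qed

lemma curve_on_plane_of_conormal:
  fixes h b T :: "real \<Rightarrow> real^3" and I :: "real set"
  assumes "convex I" "I \<noteq> {}"
    and h': "\<And>t. t \<in> I \<Longrightarrow> (h has_vector_derivative T t) (at t within I)"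
    and b': "\<And>t. t \<in> I \<Longrightarrow> (b has_vector_derivative 0) (at t within I)"
    and b_unit: "\<And>t. t \<in> I \<Longrightarrow> norm (b t) = 1"
    and b_orth: "\<And>t. t \<in> I \<Longrightarrow> b t \<bullet> T t = 0"
  obtains S where "sphere_or_plane 0 S" "\<And>t. t \<in> I \<Longrightarrow> h t \<in> S"
    "\<And>t m. t \<in> I \<Longrightarrow> unit_normal S (h t) m \<Longrightarrow> \<exists>\<mu>. m = \<mu> *\<^sub>R b t"
proof -
  have "(b has_derivative (\<lambda>u. 0)) (at t within I)" if "t \<in> I" for t
    using b'[OF that] by (simp add: has_vector_derivative_def)
  then obtain u where u: "\<And>t. t \<in> I \<Longrightarrow> b t = u"
    using has_derivative_zero_constant[OF assms(1)] by blast
  have "((\<lambda>s. u \<bullet> h s) has_derivative (\<lambda>_. 0)) (at t within I)" if "t \<in> I" for t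
  proof -
    have "((\<lambda>s. u \<bullet> h s) has_derivative (\<lambda>x. u \<bullet> (x *\<^sub>R T t))) (at t within I)"
      using bounded_linear.has_derivative[OF bounded_linear_inner_right h'[OF that, unfolded has_vector_derivative_def]] .
    moreover have "u \<bullet> T t = 0" using b_orth[OF that] u[OF that] by simp
    ultimately show ?thesis by simp
  qed
  then obtain d where d0: "\<forall>t\<in>I. u \<bullet> h t = d"
    using has_derivative_zero_constant[OF assms(1)] by blast
  then have d: "u \<bullet> h t = d" if "t \<in> I" for t using that by blast
  obtain t0 where "t0 \<in> I" using assms(2) by blast
  then have "u \<noteq> 0" using b_unit[of t0] u[of t0] by auto
  show ?thesis
  proof (rule that)
    show "sphere_or_plane 0 {x. u \<bullet> x = d}" using \<open>u \<noteq> 0\<close> by (auto simp: sphere_or_plane_def)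
    show "h t \<in> {x. u \<bullet> x = d}" if "t \<in> I" for t using d[OF that] by simp
    show "\<exists>\<mu>. m = \<mu> *\<^sub>R b t"
      if t: "t \<in> I" and m: "unit_normal {x. u \<bullet> x = d} (h t) m" for t m
    proof -
      obtain \<mu> where "m = \<mu> *\<^sub>R u"
        using unit_normal_hyperplane_parallel[OF m d[OF t] \<open>u \<noteq> 0\<close>] by blast
      then show ?thesis using u[OF t] by blast
    qed
  qed
qed

lemma curve_on_sphere_or_plane_of_conormal:
  fixes h b T :: "real \<Rightarrow> real^3" and I :: "real set"
  assumes "convex I" "I \<noteq> {}"
    and "\<And>t. t \<in> I \<Longrightarrow> (h has_vector_derivative T t) (at t within I)"
    and b': "\<And>t. t \<in> I \<Longrightarrow> (b has_vector_derivative - c *\<^sub>R T t) (at t within I)"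
    and "\<And>t. t \<in> I \<Longrightarrow> norm (b t) = 1"
    and "\<And>t. t \<in> I \<Longrightarrow> b t \<bullet> T t = 0"
  obtains S where "sphere_or_plane c S" "\<And>t. t \<in> I \<Longrightarrow> h t \<in> S"
    "\<And>t m. t \<in> I \<Longrightarrow> unit_normal S (h t) m \<Longrightarrow> \<exists>\<mu>. m = \<mu> *\<^sub>R b t"
proof (cases "c = 0")
  case True
  with b' have "(b has_vector_derivative 0) (at t within I)" if "t \<in> I" for t
    using that by simp
  with True show ?thesis
    using curve_on_plane_of_conormal[OF assms(1-3)] assms(5,6) that by blast
next
  case False
  then show ?thesis
    using curve_on_sphere_of_conormal[OF assms(1) False assms(3,4,5)] that by blast
qed

lemma line_of_curvature_meets_sphere_orthogonally:
  fixes h n :: "real \<Rightarrow> real^3"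
  assumes M: "smooth_surface M" and "\<alpha> \<le> \<beta>"
    and h: "regular_C2_curve_on h {\<alpha>..\<beta>}"
    and n: "normal_field_along M h n {\<alpha>..\<beta>}"
    and lc: "\<forall>t\<in>{\<alpha>..\<beta>}. h t \<in> M \<and> principal_direction M (h t) (vel h t) \<and> geodesic_curvature h n t = c"
  shows "\<exists>S. sphere_or_plane c S \<and> meet_orthogonally_along M S (h ` {\<alpha>..\<beta>})"
proof -
  define I where "I = {\<alpha>..\<beta>}"
  have on_M: "\<forall>s\<in>I. h s \<in> M \<and> unit_normal M (h s) (n s)"
    using lc n unfolding I_def normal_field_along_def by blast
  obtain S where S: "sphere_or_plane c S" "\<And>t. t \<in> I \<Longrightarrow> h t \<in> S"
    "\<And>t m. t \<in> I \<Longrightarrow> unit_normal S (h t) m \<Longrightarrow> \<exists>\<mu>. m = \<mu> *\<^sub>R conormal h n t"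
  proof (rule curve_on_sphere_or_plane_of_conormal)
    show "convex I" "I \<noteq> {}" using \<open>\<alpha> \<le> \<beta>\<close> by (auto simp: I_def)
    show "(h has_vector_derivative vel h t) (at t within I)" if "t \<in> I" for t
      using h that unfolding I_def regular_C2_curve_on_def by (auto intro: has_vector_derivative_at_within)
    show "(conormal h n has_vector_derivative - c *\<^sub>R vel h t) (at t within I)" if "t \<in> I" for t
      using conormal_has_vector_derivative_along_line_of_curvature[OF M h[folded I_def] n[folded I_def] that]
        lc that unfolding I_def by auto
    show "norm (conormal h n t) = 1" if "t \<in> I" for t
      using norm_conormal on_M h lc that
      unfolding I_def regular_C2_curve_on_def principal_direction_def by blast
    show "conormal h n t \<bullet> vel h t = 0" for t by (simp add: conormal_def dot_cross_self)
  qed blast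
  have "n' \<bullet> m = 0"
    if t: "t \<in> I" and n': "unit_normal M (h t) n'" and m: "unit_normal S (h t) m" for t n' m
  proof -
    obtain \<mu> where "m = \<mu> *\<^sub>R conormal h n t" using S(3)[OF t m] by blast
    moreover have "n' = n t \<or> n' = - n t"
      using unit_normal_unique_up_to_sign[OF M] on_M t n' by blast
    moreover have "n t \<bullet> conormal h n t = 0" by (simp add: conormal_def dot_cross_self)
    ultimately show ?thesis by auto
  qed
  then show ?thesis
    using S(1,2) on_M unfolding meet_orthogonally_along_def I_def by blast
qed

lemma analytic_piece_meets_sphere_orthogonally:
  assumes "smooth_surface M" "analytic_piece g h \<alpha> \<beta>" "\<alpha> \<le> \<beta>"
    and "normal_field_along M g n J" "{\<alpha>..\<beta>} \<subseteq> J" "lc_piece_hyps M c h n {\<alpha>..\<beta>}"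
  shows "\<exists>S. sphere_or_plane c S \<and> meet_orthogonally_along M S (g ` {\<alpha>..\<beta>})"
proof -
  have h_eq: "\<forall>t\<in>{\<alpha>..\<beta>}. h t = g t" using assms(2) unfolding analytic_piece_def by blast
  then have "normal_field_along M h n {\<alpha>..\<beta>}"
    using assms(4,5) unfolding normal_field_along_def by (auto intro: continuous_on_subset)
  moreover have "h ` {\<alpha>..\<beta>} = g ` {\<alpha>..\<beta>}" using h_eq by (intro image_cong) auto
  ultimately show ?thesis
    using line_of_curvature_meets_sphere_orthogonally[OF assms(1,3) analytic_piece_regular_C2[OF assms(2)]]
      assms(6) unfolding lc_piece_hyps_def by auto
qed

lemma piecewise_analytic_param_piece_bounds:
  assumes "piecewise_analytic_param g a b s k" "i < k"
  shows "a \<le> s i" "s i \<le> s (Suc i)" "s (Suc i) \<le> b"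
proof -
  have s_mono: "s i \<le> s j" if "i \<le> j" "j \<le> k" for i j
  proof (rule lift_Suc_mono_le_ivl[where N="{..<k}"])
    show "s m \<le> s (Suc m)" if "m \<in> {..<k}" for m
      using assms(1) that by (simp add: piecewise_analytic_param_def less_imp_le)
  qed (use that in auto)
  then show "a \<le> s i" "s i \<le> s (Suc i)" "s (Suc i) \<le> b"
    using s_mono[of 0 i] s_mono[of i "Suc i"] s_mono[of "Suc i" k] assms
    by (auto simp: piecewise_analytic_param_def)
qed

theorem proposition3p3:
  fixes M :: "(real^3) set" and c :: real
  assumes "smooth_surface M"
  shows "(\<forall>g a b n.
            analytic_curve_param g a b \<and> normal_field_along M g n {a..b} \<and>
            lc_piece_hyps M c g n {a..b}
            \<longrightarrow> (\<exists>S. sphere_or_plane c S \<and> meet_orthogonally_along M S (g ` {a..b})))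
       \<and> (\<forall>g a b s k n.
            piecewise_analytic_param g a b s k \<and> normal_field_along M g n {a..b} \<and>
            (\<forall>i<k. \<exists>h. analytic_piece g h (s i) (s (Suc i)) \<and>
                        lc_piece_hyps M c h n {s i..s (Suc i)})
            \<longrightarrow> (\<exists>S::nat \<Rightarrow> (real^3) set. \<forall>i<k. sphere_or_plane c (S i) \<and>
                   meet_orthogonally_along M (S i) (g ` {s i..s (Suc i)})))"
proof (intro conjI allI impI; elim conjE)
  fix g a b n
  assume param: "analytic_curve_param g a b" and n: "normal_field_along M g n {a..b}"
    and lc: "lc_piece_hyps M c g n {a..b}"
  have "a \<le> b" using param by (simp add: analytic_curve_param_def)
  with param n lc show "\<exists>S. sphere_or_plane c S \<and> meet_orthogonally_along M S (g ` {a..b})"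
    using line_of_curvature_meets_sphere_orthogonally[OF assms _ analytic_curve_param_regular_C2]
    unfolding lc_piece_hyps_def by blast
next
  fix g a b s k n
  assume param: "piecewise_analytic_param g a b s k" and n: "normal_field_along M g n {a..b}"
    and pieces: "\<forall>i<k. \<exists>h. analytic_piece g h (s i) (s (Suc i)) \<and> lc_piece_hyps M c h n {s i..s (Suc i)}"
  have "\<exists>S. sphere_or_plane c S \<and> meet_orthogonally_along M S (g ` {s i..s (Suc i)})" if "i < k" for i
    using pieces piecewise_analytic_param_piece_bounds[OF param that] that
      analytic_piece_meets_sphere_orthogonally[OF assms _ _ n] by auto
  then show "\<exists>S. \<forall>i<k. sphere_or_plane c (S i) \<and> meet_orthogonally_along M (S i) (g ` {s i..s (Suc i)})"
    by metis
qed

end
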